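(* Let $(L,d)$ be a metric locale without isolated points. Then the Booleanization $B_L=\{a\in L\mid a=a^{**}\}$ of $L$ coincides with the DeMorganization $M_L$ of $L$, i.e. $B_L=M_L$.
   Context: A frame (locale) $L$ is a complete lattice in which finite meets distribute over arbitrary joins; $a\to b$ denotes the Heyting implication (right adjoint to $a\wedge -$) and $a^*=a\to 0$ the pseudocomplement. A sublocale of $L$ is a subset $S\subseteq L$ closed under arbitrary meets (in particular $1\in S$) such that $a\to s\in S$ for all $a\in L$, $s\in S$; a sublocale is itself a frame under the inherited order. A sublocale $S$ is dense if $\bigwedge S=0$. A locale is extremally disconnected if $a^*\vee a^{**}=1$ for all $a$. For $a\in L$ the open sublocale is $\mathfrak{o}(a)=\{a\to b\mid b\in L\}$. The DeMorganization $M_L$ of $L$ is the largest dense extremally disconnected sublocale of $L$; explicitly $M_L=\bigcap_{a\in L}\mathfrak{o}(a^*\vee a^{**})$. A diameter on $L$ is a map $d\colon L\to[0,+\infty]$ with (D1) $d(0)=0$; (D2) $a\le b\Rightarrow d(a)\le d(b)$; (D3) $a\wedge b\neq 0\Rightarrow d(a\vee b)\le d(a)+d(b)$; (D4) for every $\varepsilon>0$, $\bigvee\{a\in L\mid d(a)<\varepsilon\}=1$. Write $b\lhd_\varepsilon a$ if for every $c\in L$ with $d(c)<\varepsilon$, $c\wedge b\ne0$ implies $c\le a$. The diameter is admissible if $a=\bigvee\{b\in L\mid b\lhd_\varepsilon a \text{ for some }\varepsilon>0\}$ for all $a\in L$; a metric locale is a pair $(L,d)$ with $d$ an admissible diameter.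 A point of $L$ is $p\ne1$ such that $a\wedge b\le p$ implies $a\le p$ or $b\le p$; it is isolated if the sublocale $\{1,p\}$ is an open sublocale $\mathfrak{o}(a)$ for some $a$. *)

theory Defs
  imports Main "HOL-Library.Extended_Nonnegative_Real"
begin

text \<open>Frames (locales) are modelled as a type of class complete_lattice satisfying
  the frame distributive law (finite meets distribute over arbitrary joins).\<close>

definition frame :: "'a::complete_lattice itself \<Rightarrow> bool" where
  "frame _ \<longleftrightarrow> (\<forall>(a::'a) S. inf a (Sup S) = Sup ((\<lambda>s. inf a s) ` S))"

definition himp :: "'a::complete_lattice \<Rightarrow> 'a \<Rightarrow> 'a" where
  "himp a b = Sup {c. inf c a \<le> b}"

definition pcompl :: "'a::complete_lattice \<Rightarrow> 'a" where
  "pcompl a = himp a bot"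

definition open_sublocale :: "'a::complete_lattice \<Rightarrow> 'a set" where
  "open_sublocale a = {himp a b | b. True}"

definition booleanization :: "'a::complete_lattice set" where
  "booleanization = {a. a = pcompl (pcompl a)}"

definition demorganization :: "'a::complete_lattice set" where
  "demorganization = (\<Inter>a. open_sublocale (sup (pcompl a) (pcompl (pcompl a))))"

definition diameter :: "('a::complete_lattice \<Rightarrow> ennreal) \<Rightarrow> bool" where
  "diameter d \<longleftrightarrow>
     d bot = 0 \<and>
     (\<forall>a b. a \<le> b \<longrightarrow> d a \<le> d b) \<and>
     (\<forall>a b. inf a b \<noteq> bot \<longrightarrow> d (sup a b) \<le> d a + d b) \<and>
     (\<forall>\<epsilon>::real. \<epsilon> > 0 \<longrightarrow> Sup {a. d a < ennreal \<epsilon>} = top)"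

definition wbelow :: "('a::complete_lattice \<Rightarrow> ennreal) \<Rightarrow> real \<Rightarrow> 'a \<Rightarrow> 'a \<Rightarrow> bool" where
  "wbelow d \<epsilon> b a \<longleftrightarrow> (\<forall>c. d c < ennreal \<epsilon> \<longrightarrow> inf c b \<noteq> bot \<longrightarrow> c \<le> a)"

definition admissible :: "('a::complete_lattice \<Rightarrow> ennreal) \<Rightarrow> bool" where
  "admissible d \<longleftrightarrow> (\<forall>a. a = Sup {b. \<exists>\<epsilon>::real. \<epsilon> > 0 \<and> wbelow d \<epsilon> b a})"

definition metric_locale :: "('a::complete_lattice \<Rightarrow> ennreal) \<Rightarrow> bool" where
  "metric_locale d \<longleftrightarrow> frame TYPE('a) \<and> diameter d \<and> admissible d"

definition is_point :: "'a::complete_lattice \<Rightarrow> bool" where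
  "is_point p \<longleftrightarrow> p \<noteq> top \<and> (\<forall>a b. inf a b \<le> p \<longrightarrow> a \<le> p \<or> b \<le> p)"

definition isolated_point :: "'a::complete_lattice \<Rightarrow> bool" where
  "isolated_point p \<longleftrightarrow> is_point p \<and> (\<exists>a. {top, p} = open_sublocale a)"

end

theory Submission
  imports Defs
begin

text \<open>
  The inclusion \<open>B\<^sub>L \<subseteq> M\<^sub>L\<close> holds in every frame: \<open>a\<^sup>* \<or> a\<^sup>*\<^sup>*\<close> is dense, and
  \<open>c \<rightarrow> x = x\<close> whenever \<open>c\<close> is dense and \<open>x\<close> is regular.

  For the converse let \<open>x \<in> M\<^sub>L\<close>. A maximal pairwise disjoint family \<open>M\<close> of nonzero elements
  \<open>c\<close> with \<open>d c < \<delta>\<close> and \<open>c \<lhd>\<^sub>\<delta> x\<close> for some \<open>\<delta>\<close> is dense in \<open>x\<close>, and admissibility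
  shows that \<open>x\<^sup>*\<^sup>* \<and> (\<Or>\<^sub>c s c)\<^sup>* \<le> x\<close> for every choice of nonzero \<open>s c \<le> c\<close>.
  Without isolated points no \<open>c\<close> is an atom, so each \<open>c \<in> M\<close> contains a nonzero \<open>f c\<close> with
  \<open>c \<and> (f c)\<^sup>* \<noteq> 0\<close>. Applying the bound to both choices \<open>f c\<close> and \<open>c \<and> (f c)\<^sup>*\<close> gives
  \<open>x\<^sup>*\<^sup>* \<and> (V\<^sup>* \<or> V\<^sup>*\<^sup>*) \<le> x\<close> for \<open>V = \<Or>\<^sub>c f c\<close>, and as \<open>x\<close> lies in the open sublocale
  of \<open>V\<^sup>* \<or> V\<^sup>*\<^sup>*\<close> this forces \<open>x\<^sup>*\<^sup>* \<le> x\<close>.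
\<close>

definition atom :: "'a::complete_lattice \<Rightarrow> bool" where
  "atom c \<longleftrightarrow> c \<noteq> bot \<and> (\<forall>f. f \<le> c \<longrightarrow> f = bot \<or> f = c)"

definition small_wbelow :: "('a::complete_lattice \<Rightarrow> ennreal) \<Rightarrow> 'a \<Rightarrow> 'a \<Rightarrow> bool" where
  "small_wbelow d c x \<longleftrightarrow> (\<exists>\<delta>::real. \<delta> > 0 \<and> d c < ennreal \<delta> \<and> wbelow d \<delta> c x)"

definition small_disjoint_family :: "('a::complete_lattice \<Rightarrow> ennreal) \<Rightarrow> 'a \<Rightarrow> 'a set \<Rightarrow> bool" where
  "small_disjoint_family d x M \<longleftrightarrow>
     (\<forall>c\<in>M. c \<noteq> bot \<and> small_wbelow d c x) \<and> pairwise (\<lambda>c c'. inf c c' = bot) M"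

lemma ex_maximal_small_disjoint_family:
  fixes d :: "'a::complete_lattice \<Rightarrow> ennreal"
  shows "\<exists>M. small_disjoint_family d x M \<and>
     (\<forall>M'. small_disjoint_family d x M' \<longrightarrow> M \<subseteq> M' \<longrightarrow> M' = M)"
proof -
  have "\<Union>\<C> \<in> Collect (small_disjoint_family d x)"
    if "\<C> \<in> chains (Collect (small_disjoint_family d x))" for \<C>
    using that pairwise_chain_Union[of \<C>]
    unfolding chains_def small_disjoint_family_def by blast
  then show ?thesis using Zorn_Lemma[of "Collect (small_disjoint_family d x)"] by blast
qed

lemma wbelow_antimono: "wbelow d \<epsilon> b a \<Longrightarrow> b' \<le> b \<Longrightarrow> wbelow d \<epsilon> b' a"
  unfolding wbelow_def by (metis bot_unique inf_mono order_refl)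

context
  assumes frame: "frame TYPE('a::complete_lattice)"
begin

lemma inf_Sup_distrib: "inf (a::'a) (Sup S) = Sup ((\<lambda>s. inf a s) ` S)"
  using frame by (simp add: frame_def)

lemma inf_sup_distrib: "inf (a::'a) (sup b c) = sup (inf a b) (inf a c)"
  using inf_Sup_distrib[of a "{b, c}"] by simp

lemma le_himp_iff: "(c::'a) \<le> himp a b \<longleftrightarrow> inf c a \<le> b"
proof
  assume "c \<le> himp a b"
  then have "inf c a \<le> inf a (himp a b)"
    by (simp add: inf.coboundedI2 le_infI1 inf_commute)
  also have "\<dots> = Sup ((\<lambda>s. inf a s) ` {c. inf c a \<le> b})"
    unfolding himp_def by (rule inf_Sup_distrib)
  also have "\<dots> \<le> b"
    by (auto intro!: SUP_least simp: inf_commute)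
  finally show "inf c a \<le> b" .
qed (auto simp: himp_def intro: Sup_upper)

lemma inf_himp_le: "inf (himp a b) (a::'a) \<le> b"
  using le_himp_iff by blast

lemma le_pcompl_iff: "(c::'a) \<le> pcompl a \<longleftrightarrow> inf c a = bot"
  unfolding pcompl_def le_himp_iff by (simp add: bot_unique)

lemma inf_pcompl_self: "inf (a::'a) (pcompl a) = bot"
  using le_pcompl_iff[of "pcompl a" a] by (simp add: inf_commute)

lemma le_pcompl_pcompl: "(a::'a) \<le> pcompl (pcompl a)"
  by (simp add: le_pcompl_iff inf_pcompl_self)

lemma pcompl_antimono: "(a::'a) \<le> b \<Longrightarrow> pcompl b \<le> pcompl a"
  by (metis le_pcompl_iff inf_pcompl_self inf_commute inf_mono order_refl bot_unique)

lemma pcompl_pcompl_pcompl: "pcompl (pcompl (pcompl (a::'a))) = pcompl a"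
  by (simp add: order.antisym le_pcompl_pcompl pcompl_antimono)

lemma pcompl_sup: "pcompl (sup (a::'a) b) = inf (pcompl a) (pcompl b)"
proof (rule order.antisym)
  have "inf (inf (pcompl a) (pcompl b)) (sup a b) = bot"
    by (simp add: inf_commute inf_sup_distrib inf_pcompl_self inf_left_commute[of _ a]
        inf_assoc[symmetric])
  then show "inf (pcompl a) (pcompl b) \<le> pcompl (sup a b)"
    by (simp add: le_pcompl_iff)
qed (simp add: pcompl_antimono)

lemma himp_self: "himp (a::'a) a = top"
  using le_himp_iff[of top a a] by (simp add: top_unique)

lemma himp_inf_self: "himp (a::'a) (inf a b) = himp a b"
proof (rule order.antisym)
  show "himp a (inf a b) \<le> himp a b"
    using inf_himp_le[of a "inf a b"] by (simp add: le_himp_iff)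
  show "himp a b \<le> himp a (inf a b)"
    using inf_himp_le[of a b] by (simp add: le_himp_iff)
qed

lemma himp_himp_same: "himp (a::'a) (himp a b) = himp a b"
proof (rule order.antisym)
  show "himp a (himp a b) \<le> himp a b"
    using inf_himp_le[of a "himp a b"] by (simp add: le_himp_iff inf_assoc)
qed (simp add: le_himp_iff inf_himp_le)

lemma mem_open_sublocale_iff: "(x::'a) \<in> open_sublocale a \<longleftrightarrow> himp a x = x"
proof
  assume "x \<in> open_sublocale a"
  then show "himp a x = x" unfolding open_sublocale_def by (auto simp: himp_himp_same)
next
  assume "himp a x = x"
  then show "x \<in> open_sublocale a" unfolding open_sublocale_def by (metis (mono_tags) mem_Collect_eq)
qed

lemma le_of_inf_le_mem_open_sublocale:
  assumes "(x::'a) \<in> open_sublocale c" and "inf u c \<le> x"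
  shows "u \<le> x"
  using assms by (metis mem_open_sublocale_iff le_himp_iff)

lemma himp_dense_regular:
  assumes dense: "pcompl (c::'a) = bot" and regular: "x = pcompl (pcompl x)"
  shows "himp c x = x"
proof (rule order.antisym)
  let ?y = "himp c x"
  have "inf (inf ?y (pcompl x)) c = inf (inf ?y c) (pcompl x)" by (simp add: ac_simps)
  also have "\<dots> \<le> inf x (pcompl x)" using inf_himp_le by (rule inf_mono) simp
  finally have "inf ?y (pcompl x) \<le> pcompl c"
    by (simp add: le_pcompl_iff inf_pcompl_self bot_unique)
  then have "?y \<le> pcompl (pcompl x)"
    by (simp add: dense le_pcompl_iff bot_unique)
  with regular show "?y \<le> x" by simp
qed (simp add: le_himp_iff)

lemma pcompl_sup_pcompl_pcompl: "pcompl (sup (pcompl (a::'a)) (pcompl (pcompl a))) = bot"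
  by (simp add: pcompl_sup inf_commute inf_pcompl_self)

lemma booleanization_subset_demorganization: "(booleanization :: 'a set) \<subseteq> demorganization"
  unfolding booleanization_def demorganization_def
  by (auto simp: mem_open_sublocale_iff himp_dense_regular pcompl_sup_pcompl_pcompl)

lemma Sup_image_inf_Sup_image_eq_bot:
  assumes "pairwise (\<lambda>c c'. inf c c' = bot) M"
    and "\<And>c. c \<in> M \<Longrightarrow> g c \<le> (c::'a) \<and> h c \<le> c \<and> inf (g c) (h c) = bot"
  shows "inf (Sup (g ` M)) (Sup (h ` M)) = bot"
proof -
  have "inf (g c) (h c') = bot" if "c \<in> M" "c' \<in> M" for c c'
  proof (cases "c = c'")
    case False
    then have "inf c c' = bot" using pairwiseD[OF assms(1)] that by blast
    moreover have "inf (g c) (h c') \<le> inf c c'" using assms(2) that by (meson inf_mono)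
    ultimately show ?thesis by (simp add: bot_unique)
  qed (use assms(2) that in simp)
  then show ?thesis
    by (simp add: inf_Sup_distrib inf_commute[of "Sup (g ` M)"] inf_commute[of "h _"] image_image)
qed

lemma atom_is_point_pcompl:
  assumes "atom (c::'a)"
  shows "is_point (pcompl c)"
  unfolding is_point_def
proof (intro conjI allI impI)
  show "pcompl c \<noteq> top"
    using assms inf_pcompl_self[of c] by (auto simp: atom_def)
  fix a b assume ab: "inf a b \<le> pcompl c"
  show "a \<le> pcompl c \<or> b \<le> pcompl c"
  proof (rule ccontr)
    assume "\<not> ?thesis"
    then have "inf a c = c" "inf b c = c"
      using assms inf_le2 unfolding atom_def le_pcompl_iff by blast+
    then have "inf (inf a b) c = c" by (metis inf_assoc inf_commute)
    with ab assms show False by (simp add: le_pcompl_iff atom_def)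
  qed
qed

lemma atom_open_sublocale:
  assumes "atom (c::'a)"
  shows "open_sublocale c = {top, pcompl c}"
proof -
  have "himp c b \<in> {top, pcompl c}" for b
  proof -
    have "inf c b = bot \<or> inf c b = c" using assms by (simp add: atom_def)
    then show ?thesis
      by (metis himp_inf_self himp_self pcompl_def insertCI)
  qed
  moreover have "top = himp c c" "pcompl c = himp c bot"
    by (simp_all add: himp_self pcompl_def)
  ultimately show ?thesis unfolding open_sublocale_def by auto
qed

lemma atom_isolated_point_pcompl: "atom (c::'a) \<Longrightarrow> isolated_point (pcompl c)"
  unfolding isolated_point_def using atom_is_point_pcompl atom_open_sublocale by metis

context
  fixes d :: "'a \<Rightarrow> ennreal"
  assumes diameter: "diameter d" and admissible: "admissible d"
begin

lemma diameter_mono: "a \<le> b \<Longrightarrow> d a \<le> d b"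
  using diameter by (simp add: diameter_def)

lemma Sup_small_eq_top: "\<epsilon> > 0 \<Longrightarrow> Sup {c. d c < ennreal \<epsilon>} = top"
  using diameter by (simp add: diameter_def)

lemma Sup_inf_small: "\<epsilon> > 0 \<Longrightarrow> Sup ((\<lambda>c. inf b c) ` {c. d c < ennreal \<epsilon>}) = b"
  using inf_Sup_distrib[of b "{c. d c < ennreal \<epsilon>}"] by (simp add: Sup_small_eq_top)

lemma Sup_wbelow: "Sup {b. \<exists>\<epsilon>::real. \<epsilon> > 0 \<and> wbelow d \<epsilon> b a} = a"
  using admissible by (simp add: admissible_def)

lemma wbelow_le:
  assumes "\<epsilon> > 0" and "wbelow d \<epsilon> b a"
  shows "b \<le> a"
proof -
  have "inf b c \<le> a" if "d c < ennreal \<epsilon>" for c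
    using assms(2) that unfolding wbelow_def by (metis inf_commute le_infI2 bot.extremum)
  then have "Sup ((\<lambda>c. inf b c) ` {c. d c < ennreal \<epsilon>}) \<le> a" by (auto intro: SUP_least)
  then show ?thesis using Sup_inf_small[OF assms(1)] by simp
qed

lemma sup_pcompl_eq_top_of_wbelow:
  assumes "\<epsilon> > 0" and "wbelow d \<epsilon> g f"
  shows "sup (pcompl g) f = top"
proof -
  have "c \<le> sup (pcompl g) f" if "d c < ennreal \<epsilon>" for c
    using assms(2) that unfolding wbelow_def by (metis le_pcompl_iff le_supI1 le_supI2)
  then have "Sup {c. d c < ennreal \<epsilon>} \<le> sup (pcompl g) f" by (auto intro: Sup_least)
  then show ?thesis using Sup_small_eq_top[OF assms(1)] by (simp add: top_unique)
qed

lemma small_wbelow_antimono: "small_wbelow d c x \<Longrightarrow> c' \<le> c \<Longrightarrow> small_wbelow d c' x"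
  unfolding small_wbelow_def by (meson diameter_mono order.strict_trans1 wbelow_antimono)

lemma small_wbelow_le: "small_wbelow d c x \<Longrightarrow> c \<le> x"
  unfolding small_wbelow_def using wbelow_le by blast

lemma Sup_small_wbelow: "Sup {c. small_wbelow d c x} = (x::'a)"
proof (rule order.antisym)
  show "Sup {c. small_wbelow d c x} \<le> x" by (auto intro: Sup_least small_wbelow_le)
  have "b \<le> Sup {c. small_wbelow d c x}" if "\<epsilon> > 0" "wbelow d \<epsilon> b x" for b \<epsilon>
  proof -
    have "small_wbelow d (inf b c) x" if "d c < ennreal \<epsilon>" for c
      unfolding small_wbelow_def
      using \<open>\<epsilon> > 0\<close> \<open>wbelow d \<epsilon> b x\<close> that diameter_mono[of "inf b c" c]
      by (metis inf_le1 inf_le2 order.strict_trans1 wbelow_antimono)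
    then have "Sup ((\<lambda>c. inf b c) ` {c. d c < ennreal \<epsilon>}) \<le> Sup {c. small_wbelow d c x}"
      by (auto intro: Sup_subset_mono)
    then show ?thesis using Sup_inf_small[OF \<open>\<epsilon> > 0\<close>] by simp
  qed
  then have "Sup {b. \<exists>\<epsilon>::real. \<epsilon> > 0 \<and> wbelow d \<epsilon> b x} \<le> Sup {c. small_wbelow d c x}"
    by (auto intro: Sup_least)
  then show "x \<le> Sup {c. small_wbelow d c x}" by (simp add: Sup_wbelow)
qed

text \<open>If \<open>c\<close> cannot be split, every nonzero \<open>f \<le> c\<close> equals \<open>c\<close>: admissibility yields a
  nonzero \<open>g \<lhd>\<^sub>\<epsilon> f\<close>, and then \<open>c = c \<and> (g\<^sup>* \<or> f) = c \<and> f\<close> because \<open>c \<and> g\<^sup>* = 0\<close>.\<close>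
lemma atom_or_split:
  assumes "(c::'a) \<noteq> bot"
  shows "atom c \<or> (\<exists>f. f \<noteq> bot \<and> f \<le> c \<and> inf c (pcompl f) \<noteq> bot)"
proof (rule disjCI)
  assume no_split: "\<not> (\<exists>f. f \<noteq> bot \<and> f \<le> c \<and> inf c (pcompl f) \<noteq> bot)"
  have "f = c" if "f \<le> c" "f \<noteq> bot" for f
  proof -
    obtain g \<epsilon> where g: "g \<noteq> bot" "\<epsilon> > 0" "wbelow d \<epsilon> g f"
      using Sup_wbelow[of f] \<open>f \<noteq> bot\<close> Sup_bot_conv(1)[of "{b. \<exists>\<epsilon>::real. \<epsilon> > 0 \<and> wbelow d \<epsilon> b f}"]
      by auto
    have "inf c (pcompl g) = bot"
      using no_split g wbelow_le[of \<epsilon> g f] \<open>f \<le> c\<close> by (meson order_trans)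
    then have "c = inf c f"
      using sup_pcompl_eq_top_of_wbelow[OF g(2,3)] inf_sup_distrib[of c "pcompl g" f] by simp
    with \<open>f \<le> c\<close> show "f = c" by (simp add: inf_absorb2)
  qed
  with assms show "atom c" unfolding atom_def by blast
qed

lemma ex_split_of_no_isolated_point:
  assumes "\<forall>p::'a. \<not> isolated_point p" and "(c::'a) \<noteq> bot"
  shows "\<exists>f. f \<noteq> bot \<and> f \<le> c \<and> inf c (pcompl f) \<noteq> bot"
  using atom_or_split[OF assms(2)] atom_isolated_point_pcompl assms(1) by blast

lemma maximal_small_disjoint_family_dense:
  assumes M: "small_disjoint_family d (x::'a) M"
    and maximal: "\<forall>M'. small_disjoint_family d x M' \<longrightarrow> M \<subseteq> M' \<longrightarrow> M' = M"
  shows "inf x (pcompl (Sup M)) = bot"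
proof -
  have "inf (pcompl (Sup M)) c = bot" if "small_wbelow d c x" for c
  proof (rule ccontr)
    let ?w = "inf (pcompl (Sup M)) c"
    assume "?w \<noteq> bot"
    moreover have "small_wbelow d ?w x" using that small_wbelow_antimono by simp
    moreover have "inf ?w c' = bot" if "c' \<in> M" for c'
      using that inf_pcompl_self[of "Sup M"]
      by (metis Sup_upper inf_le1 inf_mono bot_unique inf_commute)
    ultimately have "small_disjoint_family d x (insert ?w M)"
      using M unfolding small_disjoint_family_def by (auto simp: pairwise_insert inf_commute)
    then have "?w \<le> inf (Sup M) (pcompl (Sup M))"
      using maximal by (metis Sup_upper inf_le1 insertI1 le_inf_iff subset_insertI)
    with \<open>?w \<noteq> bot\<close> show False by (simp add: inf_pcompl_self bot_unique)
  qed
  then show ?thesis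
    using inf_Sup_distrib[of "pcompl (Sup M)" "{c. small_wbelow d c x}"]
    by (simp add: Sup_small_wbelow inf_commute)
qed

text \<open>Let \<open>y\<close> be the left-hand side. A nonzero \<open>w \<lhd>\<^sub>\<epsilon> y\<close> with \<open>d w < \<epsilon>\<close> meets some
  \<open>c \<in> M\<close>, as \<open>y \<le> x\<^sup>*\<^sup>*\<close> and \<open>x\<^sup>*\<^sup>* \<and> (\<Or>M)\<^sup>* = 0\<close>. If \<open>d c < \<epsilon>\<close> then
  \<open>c \<le> y \<le> (s c)\<^sup>*\<close>, which is impossible; otherwise \<open>d w < \<epsilon> \<le> d c < \<delta>\<close>, so \<open>w \<le> x\<close>
  because \<open>c \<lhd>\<^sub>\<delta> x\<close>.\<close>
lemma inf_pcompl_Sup_shrink_le: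
  assumes M: "small_disjoint_family d (x::'a) M" and dense: "inf x (pcompl (Sup M)) = bot"
    and s: "\<And>c. c \<in> M \<Longrightarrow> s c \<noteq> bot \<and> s c \<le> c"
  shows "inf (pcompl (pcompl x)) (pcompl (Sup (s ` M))) \<le> x"
proof -
  define y where "y = inf (pcompl (pcompl x)) (pcompl (Sup (s ` M)))"
  have "w \<le> x" if w: "small_wbelow d w y" for w
  proof (cases "w = bot")
    case False
    obtain \<epsilon> where \<epsilon>: "\<epsilon> > 0" "d w < ennreal \<epsilon>" "wbelow d \<epsilon> w y"
      using w unfolding small_wbelow_def by blast
    have "w \<le> y" using w by (rule small_wbelow_le)
    have "inf (pcompl (pcompl x)) (pcompl (Sup M)) = bot"
      using dense by (metis le_pcompl_iff pcompl_pcompl_pcompl inf_commute)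
    then have "inf w (Sup M) \<noteq> bot"
      using \<open>w \<le> y\<close> False unfolding y_def
      by (metis le_pcompl_iff le_inf_iff bot_unique inf_mono order_refl)
    then obtain c where "c \<in> M" and wc: "inf w c \<noteq> bot"
      by (auto simp: inf_Sup_distrib)
    then obtain \<delta> where \<delta>: "d c < ennreal \<delta>" "wbelow d \<delta> c x"
      using M unfolding small_disjoint_family_def small_wbelow_def by blast
    show "w \<le> x"
    proof (cases "d c < ennreal \<epsilon>")
      case True
      then have "c \<le> pcompl (Sup (s ` M))"
        using \<epsilon>(3) wc \<open>c \<in> M\<close> unfolding wbelow_def y_def by (metis inf_commute le_inf_iff)
      moreover have "s c \<le> Sup (s ` M)" using \<open>c \<in> M\<close> by (simp add: Sup_upper)
      ultimately have "s c \<le> inf (Sup (s ` M)) (pcompl (Sup (s ` M)))"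
        using s[OF \<open>c \<in> M\<close>] by (meson le_inf_iff order_trans)
      then show ?thesis using s[OF \<open>c \<in> M\<close>] by (simp add: inf_pcompl_self bot_unique)
    next
      case False
      then have "d w < ennreal \<delta>" using \<epsilon>(2) \<delta>(1) by simp
      then show ?thesis using \<delta>(2) wc unfolding wbelow_def by blast
    qed
  qed simp
  then show ?thesis
    using Sup_small_wbelow[of y] unfolding y_def by (metis Sup_least mem_Collect_eq)
qed

lemma mem_demorganization_regular:
  assumes no_isolated: "\<forall>p::'a. \<not> isolated_point p" and x: "(x::'a) \<in> demorganization"
  shows "x = pcompl (pcompl x)"
proof -
  obtain M where M: "small_disjoint_family d x M"
    and maximal: "\<forall>M'. small_disjoint_family d x M' \<longrightarrow> M \<subseteq> M' \<longrightarrow> M' = M"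
    using ex_maximal_small_disjoint_family by blast
  have dense: "inf x (pcompl (Sup M)) = bot"
    using maximal_small_disjoint_family_dense[OF M maximal] .
  obtain f where f: "\<And>c. c \<in> M \<Longrightarrow> f c \<noteq> bot \<and> f c \<le> c \<and> inf c (pcompl (f c)) \<noteq> bot"
    using ex_split_of_no_isolated_point[OF no_isolated] M unfolding small_disjoint_family_def
    by metis
  define V where "V = Sup (f ` M)"
  define W where "W = Sup ((\<lambda>c. inf c (pcompl (f c))) ` M)"
  let ?u = "pcompl (pcompl x)"
  have "inf ?u (pcompl V) \<le> x"
    unfolding V_def using inf_pcompl_Sup_shrink_le[OF M dense] f by blast
  moreover have "inf ?u (pcompl W) \<le> x"
    unfolding W_def using inf_pcompl_Sup_shrink_le[OF M dense] f by simp
  moreover have "inf V W = bot"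
    unfolding V_def W_def using M f
    by (intro Sup_image_inf_Sup_image_eq_bot)
      (auto simp: small_disjoint_family_def inf_left_commute[of "f _"] inf_pcompl_self)
  then have "W \<le> pcompl V" by (simp add: le_pcompl_iff inf_commute)
  then have "pcompl (pcompl V) \<le> pcompl W" by (rule pcompl_antimono)
  ultimately have "inf ?u (sup (pcompl V) (pcompl (pcompl V))) \<le> x"
    by (simp add: inf_sup_distrib) (meson inf_mono order_refl order_trans)
  moreover have "x \<in> open_sublocale (sup (pcompl V) (pcompl (pcompl V)))"
    using x unfolding demorganization_def by blast
  ultimately have "?u \<le> x" by (rule le_of_inf_le_mem_open_sublocale[rotated])
  then show ?thesis by (simp add: order.antisym le_pcompl_pcompl)
qed

end

end

theorem corollary5p6:
  fixes d :: "'a::complete_lattice \<Rightarrow> ennreal"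
  assumes "metric_locale d"
    and "\<forall>p::'a. \<not> isolated_point p"
  shows "(booleanization :: 'a set) = demorganization"
proof
  have frame: "frame TYPE('a)" and "diameter d" and "admissible d"
    using assms(1) unfolding metric_locale_def by auto
  show "(booleanization :: 'a set) \<subseteq> demorganization"
    using booleanization_subset_demorganization[OF frame] .
  show "demorganization \<subseteq> (booleanization :: 'a set)"
    using mem_demorganization_regular[OF frame \<open>diameter d\<close> \<open>admissible d\<close> assms(2)]
    unfolding booleanization_def by blast
qed

end
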